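(* Let $\mathbb K$ be a field with $2\in\mathbb K^\times$ and $A$ a unital commutative associative $\mathbb K$-algebra with unit $\mathbf 1$. The linear map $\gamma_A:\Lambda^2(A)\to\Omega^1(A)$, $a\wedge b\mapsto a\,d_A(b)-b\,d_A(a)$, is surjective and $\ker\gamma_A=T_0(A)$.
   Context: $(\Omega^1(A),d_A)$ is the universal differential module of $A$: $\Omega^1(A)$ is an $A$-module and $d_A:A\to\Omega^1(A)$ a derivation such that every derivation into an $A$-module factors uniquely through an $A$-module map. $T_0(A)$ is the linear span of $ab\wedge c+bc\wedge a+ca\wedge b-abc\wedge\mathbf 1$ for $a,b,c\in A$. *)

theory Defs
  imports Main HOL.Vector_Spaces "HOL-Library.Function_Algebras"
begin

definition fsupp :: "('b \<Rightarrow> 'c::zero) \<Rightarrow> bool" where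
  "fsupp f \<longleftrightarrow> finite {x. f x \<noteq> 0}"

definition kalg :: "('k::field \<Rightarrow> 'a::comm_ring_1 \<Rightarrow> 'a) \<Rightarrow> bool" where
  "kalg sm \<longleftrightarrow> vector_space sm \<and> (\<forall>c x y. sm c (x * y) = sm c x * y)"

text \<open>The free A-module on symbols [b], b in A; fdiff a b is the formal element a [b].\<close>
definition fdiff :: "'a::comm_ring_1 \<Rightarrow> 'a \<Rightarrow> ('a \<Rightarrow> 'a)" where
  "fdiff a b = (\<lambda>x. if x = b then a else 0)"

definition ascale :: "'a::comm_ring_1 \<Rightarrow> ('a \<Rightarrow> 'a) \<Rightarrow> ('a \<Rightarrow> 'a)" where
  "ascale a f = (\<lambda>x. a * f x)"

definition omega_free :: "('a::comm_ring_1 \<Rightarrow> 'a) set" where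
  "omega_free = {f. fsupp f}"

text \<open>Relations: d is additive, K-linear and satisfies the Leibniz rule.
  Omega^1(A) = omega_free / omega_rel sm, with d_A(b) the class of fdiff 1 b.\<close>
definition omega_rel :: "('k::field \<Rightarrow> 'a::comm_ring_1 \<Rightarrow> 'a) \<Rightarrow> ('a \<Rightarrow> 'a) set" where
  "omega_rel sm = module.span ascale
     ({fdiff 1 (x + y) - fdiff 1 x - fdiff 1 y | x y. True}
      \<union> {fdiff 1 (sm c x) - fdiff (sm c 1) x | c x. True}
      \<union> {fdiff 1 (x * y) - fdiff x y - fdiff y x | x y. True})"

text \<open>The free K-vector space on pairs (a,b); wg a b is the basis vector of (a,b).\<close>
definition wg :: "'a \<Rightarrow> 'a \<Rightarrow> ('a \<times> 'a \<Rightarrow> 'k::field)" where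
  "wg a b = (\<lambda>p. if p = (a, b) then 1 else 0)"

definition kscale :: "'k::field \<Rightarrow> ('a \<times> 'a \<Rightarrow> 'k) \<Rightarrow> ('a \<times> 'a \<Rightarrow> 'k)" where
  "kscale c f = (\<lambda>p. c * f p)"

definition lambda_free :: "('a \<times> 'a \<Rightarrow> 'k::field) set" where
  "lambda_free = {f. fsupp f}"

text \<open>Relations: bilinearity over K and alternation.
  Lambda^2(A) = lambda_free / span(lambda_rel_gens sm), a \<and> b the class of wg a b.\<close>
definition lambda_rel_gens :: "('k::field \<Rightarrow> 'a::comm_ring_1 \<Rightarrow> 'a) \<Rightarrow> ('a \<times> 'a \<Rightarrow> 'k) set" where
  "lambda_rel_gens sm =
      {wg (x + y) z - wg x z - wg y z | x y z. True}
    \<union> {wg z (x + y) - wg z x - wg z y | x y z. True}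
    \<union> {wg (sm c x) z - kscale c (wg x z) | c x z. True}
    \<union> {wg z (sm c x) - kscale c (wg z x) | c x z. True}
    \<union> {wg x x | x. True}"

text \<open>Lifts of the spanning elements of T_0(A).\<close>
definition T0_gens :: "('a::comm_ring_1 \<times> 'a \<Rightarrow> 'k::field) set" where
  "T0_gens = {wg (a * b) c + wg (b * c) a + wg (c * a) b - wg (a * b * c) (1::'a)
              | a b c. True}"

definition gamma_free :: "('k::field \<Rightarrow> 'a::comm_ring_1 \<Rightarrow> 'a) \<Rightarrow> ('a \<times> 'a \<Rightarrow> 'k) \<Rightarrow> ('a \<Rightarrow> 'a)" where
  "gamma_free sm w = (\<Sum>p\<in>{p. w p \<noteq> 0}.
      (\<lambda>x. sm (w p) (fdiff (fst p) (snd p) x - fdiff (snd p) (fst p) x)))"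

end

theory Submission
  imports Defs
begin

text \<open>Write \<open>\<approx>\<close> for congruence modulo the bilinearity, alternation and \<open>T\<^sub>0\<close> relations.
  The map \<open>\<gamma>\<close> sends each of these relations into the relations of \<open>\<Omega>\<^sup>1(A)\<close> (a \<open>T\<^sub>0\<close>
  generator becomes a combination of Leibniz relations and \<open>d(\<one>) = 0\<close>), so it descends to
  \<open>\<Lambda>\<^sup>2(A)/T\<^sub>0(A) \<rightarrow> \<Omega>\<^sup>1(A)\<close>. An inverse is \<open>\<beta>(a d(x)) = \<onehalf>(a \<and> x + \<one> \<and> ax)\<close>: modulo \<open>\<approx>\<close>
  it respects additivity and \<open>K\<close>-linearity of \<open>d\<close> by bilinearity, and the Leibniz rule
  because \<open>c \<and> xy - cx \<and> y - cy \<and> x - \<one> \<and> cxy\<close> is a \<open>T\<^sub>0\<close> generator up to alternation.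
  Then \<open>\<gamma>(\<beta>(a d(x))) = \<onehalf>(a d(x) - x d(a) + d(ax) - ax d(\<one>)) = a d(x)\<close> by the Leibniz rule,
  and \<open>\<beta>(\<gamma>(a \<and> b)) = \<onehalf>(a \<and> b - b \<and> a) \<approx> a \<and> b\<close>.\<close>

section \<open>Finitely supported functions\<close>

lemma sum_fun_apply: "sum f S x = (\<Sum>i\<in>S. f i x)"
  by (induction S rule: infinite_finite_induct) auto

lemma fsupp_zero [simp]: "fsupp 0"
  by (simp add: fsupp_def)

lemma fsupp_add [simp]: "fsupp f \<Longrightarrow> fsupp g \<Longrightarrow> fsupp (f + (g :: 'b \<Rightarrow> 'c::monoid_add))"
  unfolding fsupp_def by (rule finite_subset[of _ "{x. f x \<noteq> 0} \<union> {x. g x \<noteq> 0}"]) auto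

lemma fsupp_diff [simp]: "fsupp f \<Longrightarrow> fsupp g \<Longrightarrow> fsupp (f - (g :: 'b \<Rightarrow> 'c::group_add))"
  unfolding fsupp_def by (rule finite_subset[of _ "{x. f x \<noteq> 0} \<union> {x. g x \<noteq> 0}"]) auto

lemma fsupp_sum: "(\<And>i. i \<in> I \<Longrightarrow> fsupp (f i)) \<Longrightarrow> fsupp (sum f I :: 'b \<Rightarrow> 'c::comm_monoid_add)"
  by (induction I rule: infinite_finite_induct) auto

lemma fsupp_wg [simp]: "fsupp (wg a b)"
  unfolding fsupp_def wg_def by (rule finite_subset[of _ "{(a, b)}"]) auto

lemma fsupp_fdiff [simp]: "fsupp (fdiff a b)"
  unfolding fsupp_def fdiff_def by (rule finite_subset[of _ "{b}"]) auto

lemma fsupp_kscale [simp]: "fsupp f \<Longrightarrow> fsupp (kscale c f)"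
  unfolding fsupp_def kscale_def by (rule finite_subset[of _ "{x. f x \<noteq> 0}"]) auto

lemma fsupp_ascale [simp]: "fsupp f \<Longrightarrow> fsupp (ascale c f)"
  unfolding fsupp_def ascale_def by (rule finite_subset[of _ "{x. f x \<noteq> 0}"]) auto

lemma fdiff_add: "fdiff (a + b) x = fdiff a x + fdiff b x"
  by (auto simp: fdiff_def fun_eq_iff)

lemma ascale_fdiff [simp]: "ascale c (fdiff a x) = fdiff (c * a) x"
  by (auto simp: fdiff_def fun_eq_iff ascale_def)

interpretation Omega: module "ascale :: 'a::comm_ring_1 \<Rightarrow> ('a \<Rightarrow> 'a) \<Rightarrow> ('a \<Rightarrow> 'a)"
  by unfold_locales (auto simp: ascale_def fun_eq_iff algebra_simps)

interpretation Wedge: vector_space "kscale :: 'k::field \<Rightarrow> ('b \<times> 'b \<Rightarrow> 'k) \<Rightarrow> ('b \<times> 'b \<Rightarrow> 'k)"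
  by unfold_locales (auto simp: kscale_def fun_eq_iff algebra_simps)

lemma fsupp_eq_sum_fdiff: "fsupp f \<Longrightarrow> f = (\<Sum>x | f x \<noteq> 0. fdiff (f x) x)"
  unfolding fsupp_def by (auto simp: fun_eq_iff sum_fun_apply fdiff_def)

lemma fsupp_eq_sum_wg: "fsupp w \<Longrightarrow> w = (\<Sum>p | w p \<noteq> 0. kscale (w p) (wg (fst p) (snd p)))"
  unfolding fsupp_def by (auto simp: fun_eq_iff sum_fun_apply wg_def kscale_def if_distrib cong: if_cong)

section \<open>Congruence modulo a span\<close>

definition (in module) cong_mod :: "'b set \<Rightarrow> 'b \<Rightarrow> 'b \<Rightarrow> bool" where
  "cong_mod S x y \<longleftrightarrow> x - y \<in> span S"

context module
begin

lemma cong_mod_refl [simp]: "cong_mod S x x"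
  by (simp add: cong_mod_def span_zero)

lemma cong_mod_sym: "cong_mod S x y \<Longrightarrow> cong_mod S y x"
  unfolding cong_mod_def by (metis minus_diff_eq span_neg)

lemma cong_mod_trans [trans]: "cong_mod S x y \<Longrightarrow> cong_mod S y z \<Longrightarrow> cong_mod S x z"
  unfolding cong_mod_def by (metis diff_add_cancel add_diff_eq span_add)

text \<open>Without these rules, \<open>also\<close>-chains mixing \<open>=\<close> and \<open>cong_mod\<close> fall back to
  substitution rules, whose higher-order unification can explode on large sums.\<close>

lemma eq_cong_mod_trans [trans]: "x = y \<Longrightarrow> cong_mod S y z \<Longrightarrow> cong_mod S x z"
  by simp

lemma cong_mod_eq_trans [trans]: "cong_mod S x y \<Longrightarrow> y = z \<Longrightarrow> cong_mod S x z"
  by simp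

lemma cong_mod_add: "cong_mod S x x' \<Longrightarrow> cong_mod S y y' \<Longrightarrow> cong_mod S (x + y) (x' + y')"
  unfolding cong_mod_def by (drule (1) span_add) (simp add: algebra_simps)

lemma cong_mod_diff: "cong_mod S x x' \<Longrightarrow> cong_mod S y y' \<Longrightarrow> cong_mod S (x - y) (x' - y')"
  unfolding cong_mod_def by (drule (1) span_diff) (simp add: algebra_simps)

lemma cong_mod_scale: "cong_mod S x y \<Longrightarrow> cong_mod S (c *s x) (c *s y)"
  unfolding cong_mod_def by (drule span_scale[of _ _ c]) (simp add: scale_right_diff_distrib)

lemma cong_mod_sum:
  "(\<And>i. i \<in> I \<Longrightarrow> cong_mod S (f i) (g i)) \<Longrightarrow> cong_mod S (sum f I) (sum g I)"
  unfolding cong_mod_def by (simp add: span_sum flip: sum_subtractf)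

lemma cong_mod_zero_iff: "cong_mod S x 0 \<longleftrightarrow> x \<in> span S"
  by (simp add: cong_mod_def)

end

section \<open>The map \<open>\<gamma>\<close> on the free level\<close>

locale kalgebra =
  fixes sm :: "'k::field \<Rightarrow> 'a::comm_ring_1 \<Rightarrow> 'a"
  assumes kalg: "kalg sm"
begin

sublocale K: vector_space sm
  using kalg unfolding kalg_def by auto

lemma scale_eq_mult: "sm c x = sm c 1 * x"
  using kalg unfolding kalg_def by (metis mult_1)

lemma gamma_free_eq_sum:
  "gamma_free sm w =
     (\<Sum>p | w p \<noteq> 0. ascale (sm (w p) 1) (fdiff (fst p) (snd p) - fdiff (snd p) (fst p)))"
  unfolding gamma_free_def
  by (intro sum.cong refl ext, subst scale_eq_mult) (simp add: ascale_def fdiff_def)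

lemma gamma_free_superset:
  assumes "finite S" "{p. w p \<noteq> 0} \<subseteq> S"
  shows "gamma_free sm w =
     (\<Sum>p\<in>S. ascale (sm (w p) 1) (fdiff (fst p) (snd p) - fdiff (snd p) (fst p)))"
  unfolding gamma_free_eq_sum by (rule sum.mono_neutral_left) (use assms in auto)

lemma gamma_free_add:
  assumes "fsupp v" "fsupp w"
  shows "gamma_free sm (v + w) = gamma_free sm v + gamma_free sm w"
proof -
  let ?S = "{p. v p \<noteq> 0} \<union> {p. w p \<noteq> 0}"
  have "finite ?S"
    using assms unfolding fsupp_def by auto
  then show ?thesis
    by (subst (1 2 3) gamma_free_superset[of ?S])
       (auto simp: K.scale_left_distrib Omega.scale_left_distrib sum.distrib)
qed

lemma gamma_free_diff:
  assumes "fsupp v" "fsupp w"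
  shows "gamma_free sm (v - w) = gamma_free sm v - gamma_free sm w"
  using gamma_free_add[of "v - w" w] assms by simp

lemma gamma_free_kscale:
  assumes "fsupp w"
  shows "gamma_free sm (kscale c w) = ascale (sm c 1) (gamma_free sm w)"
proof -
  have "sm (c * d) 1 = sm c 1 * sm d 1" for d
    using scale_eq_mult[of c "sm d 1"] by simp
  moreover have "finite {p. w p \<noteq> 0}"
    using assms unfolding fsupp_def .
  ultimately show ?thesis
    by (subst (1 2) gamma_free_superset[of "{p. w p \<noteq> 0}"])
       (auto simp: kscale_def Omega.scale_sum_right)
qed

lemma gamma_free_zero [simp]: "gamma_free sm 0 = 0"
  by (simp add: gamma_free_def)

lemma gamma_free_sum:
  "(\<And>i. i \<in> I \<Longrightarrow> fsupp (f i)) \<Longrightarrow> gamma_free sm (sum f I) = (\<Sum>i\<in>I. gamma_free sm (f i))"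
  by (induction I rule: infinite_finite_induct) (auto simp: gamma_free_add fsupp_sum)

lemma gamma_free_wg: "gamma_free sm (wg a b) = fdiff a b - fdiff b a"
  by (subst gamma_free_superset[of "{(a, b)}"]) (auto simp: wg_def)

lemma omega_rel_subspace: "Omega.subspace (omega_rel sm)"
  unfolding omega_rel_def by (rule Omega.subspace_span)

lemmas omega_rel_zero = Omega.subspace_0[OF omega_rel_subspace]
lemmas omega_rel_add = Omega.subspace_add[OF omega_rel_subspace]
lemmas omega_rel_diff = Omega.subspace_diff[OF omega_rel_subspace]
lemmas omega_rel_neg = Omega.subspace_neg[OF omega_rel_subspace]
lemmas omega_rel_scale = Omega.subspace_scale[OF omega_rel_subspace]
lemmas omega_rel_sum = Omega.subspace_sum[OF omega_rel_subspace]

lemma omega_rel_additive: "fdiff 1 (x + y) - fdiff 1 x - fdiff 1 y \<in> omega_rel sm"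
  unfolding omega_rel_def by (rule Omega.span_base) blast

lemma omega_rel_homogeneous: "fdiff 1 (sm c x) - fdiff (sm c 1) x \<in> omega_rel sm"
  unfolding omega_rel_def by (rule Omega.span_base) blast

lemma omega_rel_leibniz: "fdiff 1 (x * y) - fdiff x y - fdiff y x \<in> omega_rel sm"
  unfolding omega_rel_def by (rule Omega.span_base) blast

lemma omega_rel_fdiff_one: "fdiff a 1 \<in> omega_rel sm"
proof -
  have "fdiff 1 1 = - (fdiff 1 (1 * 1) - fdiff 1 1 - fdiff 1 1)"
    by simp
  also have "\<dots> \<in> omega_rel sm"
    by (rule omega_rel_neg[OF omega_rel_leibniz])
  finally show ?thesis
    using omega_rel_scale[of "fdiff 1 1" a] by simp
qed

lemma fsupp_wedge_rel_gens: "g \<in> lambda_rel_gens sm \<union> T0_gens \<Longrightarrow> fsupp g"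
  unfolding lambda_rel_gens_def T0_gens_def by auto

lemma gamma_free_additive_left_rel: "gamma_free sm (wg (x + y) z - wg x z - wg y z) \<in> omega_rel sm"
proof -
  have "gamma_free sm (wg (x + y) z - wg x z - wg y z) =
      - ascale z (fdiff 1 (x + y) - fdiff 1 x - fdiff 1 y)"
    by (simp add: gamma_free_diff gamma_free_wg fdiff_add Omega.scale_right_diff_distrib)
  then show ?thesis
    by (simp add: omega_rel_neg omega_rel_scale omega_rel_additive)
qed

lemma gamma_free_additive_right_rel: "gamma_free sm (wg z (x + y) - wg z x - wg z y) \<in> omega_rel sm"
proof -
  have "gamma_free sm (wg z (x + y) - wg z x - wg z y) =
      ascale z (fdiff 1 (x + y) - fdiff 1 x - fdiff 1 y)"
    by (simp add: gamma_free_diff gamma_free_wg fdiff_add Omega.scale_right_diff_distrib)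
  then show ?thesis
    by (simp add: omega_rel_scale omega_rel_additive)
qed

lemma gamma_free_homogeneous_left_rel:
  "gamma_free sm (wg (sm c x) z - kscale c (wg x z)) \<in> omega_rel sm"
proof -
  have "gamma_free sm (wg (sm c x) z - kscale c (wg x z)) =
      - ascale z (fdiff 1 (sm c x) - fdiff (sm c 1) x)"
    unfolding scale_eq_mult[of c x]
    by (simp add: gamma_free_diff gamma_free_kscale gamma_free_wg algebra_simps)
  then show ?thesis
    by (simp add: omega_rel_neg omega_rel_scale omega_rel_homogeneous)
qed

lemma gamma_free_homogeneous_right_rel:
  "gamma_free sm (wg z (sm c x) - kscale c (wg z x)) \<in> omega_rel sm"
proof -
  have "gamma_free sm (wg z (sm c x) - kscale c (wg z x)) =
      ascale z (fdiff 1 (sm c x) - fdiff (sm c 1) x)"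
    unfolding scale_eq_mult[of c x]
    by (simp add: gamma_free_diff gamma_free_kscale gamma_free_wg algebra_simps)
  then show ?thesis
    by (simp add: omega_rel_scale omega_rel_homogeneous)
qed

lemma gamma_free_T0_rel:
  "gamma_free sm (wg (a * b) c + wg (b * c) a + wg (c * a) b - wg (a * b * c) 1) \<in> omega_rel sm"
proof -
  have "gamma_free sm (wg (a * b) c + wg (b * c) a + wg (c * a) b - wg (a * b * c) 1) =
      (fdiff 1 (a * b * c) - fdiff (a * b) c - fdiff c (a * b))
    - ascale a (fdiff 1 (b * c) - fdiff b c - fdiff c b)
    - ascale b (fdiff 1 (c * a) - fdiff c a - fdiff a c) - fdiff (a * b * c) 1"
    by (simp add: gamma_free_diff gamma_free_add gamma_free_wg algebra_simps)
  then show ?thesis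
    by (simp add: omega_rel_diff omega_rel_scale omega_rel_leibniz omega_rel_fdiff_one)
qed

lemma gamma_free_wedge_rel_gens:
  "g \<in> lambda_rel_gens sm \<union> T0_gens \<Longrightarrow> gamma_free sm g \<in> omega_rel sm"
  unfolding lambda_rel_gens_def T0_gens_def
  by (auto simp: gamma_free_wg omega_rel_zero gamma_free_additive_left_rel
      gamma_free_additive_right_rel gamma_free_homogeneous_left_rel
      gamma_free_homogeneous_right_rel gamma_free_T0_rel)

lemma gamma_free_wedge_rel_span:
  assumes "w \<in> Wedge.span (lambda_rel_gens sm \<union> T0_gens)"
  shows "gamma_free sm w \<in> omega_rel sm"
proof -
  have "Wedge.subspace {w. fsupp w \<and> gamma_free sm w \<in> omega_rel sm}"
    by (auto simp: Wedge.subspace_def gamma_free_add gamma_free_kscale omega_rel_add omega_rel_scale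
        omega_rel_zero)
  then have "w \<in> {w. fsupp w \<and> gamma_free sm w \<in> omega_rel sm}"
    by (rule Wedge.span_subspace_induct[OF assms])
       (simp add: fsupp_wedge_rel_gens gamma_free_wedge_rel_gens)
  then show ?thesis
    by simp
qed

section \<open>Relations of the exterior square\<close>

abbreviation wedge_cong :: "('a \<times> 'a \<Rightarrow> 'k) \<Rightarrow> ('a \<times> 'a \<Rightarrow> 'k) \<Rightarrow> bool" (infix "\<approx>" 50)
  where "v \<approx> w \<equiv> Wedge.cong_mod (lambda_rel_gens sm \<union> T0_gens) v w"

lemma wedge_cong_base: "v - w \<in> lambda_rel_gens sm \<union> T0_gens \<Longrightarrow> v \<approx> w"
  by (simp add: Wedge.cong_mod_def Wedge.span_base)

lemma wg_add_left: "wg (x + y) z \<approx> wg x z + wg y z"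
  by (rule wedge_cong_base) (unfold lambda_rel_gens_def diff_diff_eq[symmetric], blast)

lemma wg_add_right: "wg z (x + y) \<approx> wg z x + wg z y"
  by (rule wedge_cong_base) (unfold lambda_rel_gens_def diff_diff_eq[symmetric], blast)

lemma wg_scale_left: "wg (sm c x) z \<approx> kscale c (wg x z)"
  by (rule wedge_cong_base) (unfold lambda_rel_gens_def, blast)

lemma wg_scale_right: "wg z (sm c x) \<approx> kscale c (wg z x)"
  by (rule wedge_cong_base) (unfold lambda_rel_gens_def, blast)

lemma wg_self: "wg x x \<approx> 0"
  by (rule wedge_cong_base) (unfold lambda_rel_gens_def diff_zero, blast)

lemma wg_T0: "wg (a * b) c + wg (b * c) a + wg (c * a) b - wg (a * b * c) 1 \<approx> 0"
  by (rule wedge_cong_base) (unfold T0_gens_def diff_zero, blast)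

lemma wg_zero_left: "wg 0 z \<approx> 0"
  using wg_scale_left[where c = 0 and x = 0] by simp

lemma wg_zero_right: "wg z 0 \<approx> 0"
  using wg_scale_right[where c = 0 and x = 0] by simp

lemma wg_swap: "wg a b + wg b a \<approx> 0"
proof -
  have "0 \<approx> wg (a + b) (a + b)"
    by (rule Wedge.cong_mod_sym[OF wg_self])
  also have "\<dots> \<approx> wg a (a + b) + wg b (a + b)"
    by (rule wg_add_left)
  also have "\<dots> \<approx> (wg a a + wg a b) + (wg b a + wg b b)"
    by (intro Wedge.cong_mod_add wg_add_right)
  also have "\<dots> \<approx> (0 + wg a b) + (wg b a + 0)"
    by (intro Wedge.cong_mod_add wg_self Wedge.cong_mod_refl)
  finally show ?thesis
    by (simp add: Wedge.cong_mod_sym)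
qed

lemma wg_leibniz: "wg c (x * y) \<approx> wg (c * x) y + wg (c * y) x + wg 1 (c * x * y)"
proof -
  have "y * c = c * y" "x * y * c = c * x * y"
    by (simp_all add: mult.commute mult.left_commute)
  with wg_T0[of x y c]
  have T0: "wg (x * y) c + wg (c * y) x + wg (c * x) y - wg (c * x * y) 1 \<approx> 0"
    by simp
  have "wg c (x * y) =
      (wg c (x * y) + wg (x * y) c)
    - (wg (x * y) c + wg (c * y) x + wg (c * x) y - wg (c * x * y) 1)
    - (wg (c * x * y) 1 + wg 1 (c * x * y))
    + (wg (c * x) y + wg (c * y) x + wg 1 (c * x * y))"
    by (simp add: algebra_simps)
  also have "\<dots> \<approx> 0 - 0 - 0 + (wg (c * x) y + wg (c * y) x + wg 1 (c * x * y))"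
    by (intro Wedge.cong_mod_add Wedge.cong_mod_diff wg_swap T0 Wedge.cong_mod_refl)
  finally show ?thesis
    by simp
qed

section \<open>The inverse map \<open>\<beta>\<close>\<close>

definition beta_term :: "'a \<Rightarrow> 'a \<Rightarrow> ('a \<times> 'a \<Rightarrow> 'k)" where
  "beta_term a x = kscale (1/2) (wg a x + wg 1 (a * x))"

definition beta :: "('a \<Rightarrow> 'a) \<Rightarrow> ('a \<times> 'a \<Rightarrow> 'k)" where
  "beta f = (\<Sum>x | f x \<noteq> 0. beta_term (f x) x)"

lemma fsupp_beta_term [simp]: "fsupp (beta_term a x)"
  by (simp add: beta_term_def)

lemma fsupp_beta [simp]: "fsupp (beta f)"
  by (simp add: beta_def fsupp_sum)

lemma beta_term_zero: "beta_term 0 x \<approx> 0"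
proof -
  have "beta_term 0 x \<approx> kscale (1/2) (0 + 0)"
    unfolding beta_term_def by (intro Wedge.cong_mod_scale Wedge.cong_mod_add wg_zero_left)
       (simp add: wg_zero_right)
  then show ?thesis
    by simp
qed

lemma beta_term_add_left: "beta_term (a + b) x \<approx> beta_term a x + beta_term b x"
proof -
  have "beta_term (a + b) x = kscale (1/2) (wg (a + b) x + wg 1 (a * x + b * x))"
    by (simp add: beta_term_def distrib_right)
  also have "\<dots> \<approx> kscale (1/2) ((wg a x + wg b x) + (wg 1 (a * x) + wg 1 (b * x)))"
    by (intro Wedge.cong_mod_scale Wedge.cong_mod_add wg_add_left wg_add_right)
  also have "\<dots> = beta_term a x + beta_term b x"
    by (simp add: beta_term_def algebra_simps)
  finally show ?thesis .
qed

lemma beta_term_add_right: "beta_term c (x + y) \<approx> beta_term c x + beta_term c y"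
proof -
  have "beta_term c (x + y) = kscale (1/2) (wg c (x + y) + wg 1 (c * x + c * y))"
    by (simp add: beta_term_def distrib_left)
  also have "\<dots> \<approx> kscale (1/2) ((wg c x + wg c y) + (wg 1 (c * x) + wg 1 (c * y)))"
    by (intro Wedge.cong_mod_scale Wedge.cong_mod_add wg_add_right)
  also have "\<dots> = beta_term c x + beta_term c y"
    by (simp add: beta_term_def algebra_simps)
  finally show ?thesis .
qed

lemma beta_term_homogeneous: "beta_term c (sm s x) \<approx> beta_term (sm s c) x"
proof -
  have "c * sm s x = sm s c * x"
    by (simp add: scale_eq_mult[of s x] scale_eq_mult[of s c] ac_simps)
  then have "beta_term c (sm s x) = kscale (1/2) (wg c (sm s x) + wg 1 (sm s c * x))"
    by (simp add: beta_term_def)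
  also have "\<dots> \<approx> kscale (1/2) (kscale s (wg c x) + wg 1 (sm s c * x))"
    by (intro Wedge.cong_mod_scale Wedge.cong_mod_add wg_scale_right Wedge.cong_mod_refl)
  also have "\<dots> \<approx> kscale (1/2) (wg (sm s c) x + wg 1 (sm s c * x))"
    by (intro Wedge.cong_mod_scale Wedge.cong_mod_add Wedge.cong_mod_sym[OF wg_scale_left]
        Wedge.cong_mod_refl)
  finally show ?thesis
    by (simp add: beta_term_def)
qed

lemma beta_term_leibniz: "beta_term c (x * y) \<approx> beta_term (c * x) y + beta_term (c * y) x"
proof -
  have "beta_term c (x * y) = kscale (1/2) (wg c (x * y) + wg 1 (c * x * y))"
    by (simp add: beta_term_def mult.assoc)
  also have "\<dots> \<approx> kscale (1/2) ((wg (c * x) y + wg (c * y) x + wg 1 (c * x * y)) + wg 1 (c * x * y))"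
    by (intro Wedge.cong_mod_scale Wedge.cong_mod_add wg_leibniz Wedge.cong_mod_refl)
  also have "\<dots> = beta_term (c * x) y + beta_term (c * y) x"
    by (simp add: beta_term_def kscale_def fun_eq_iff algebra_simps)
  finally show ?thesis .
qed

lemma beta_term_antisym:
  assumes two: "(2::'k) \<noteq> 0"
  shows "beta_term (sm c a) b - beta_term (sm c b) a \<approx> kscale c (wg a b)"
proof -
  have "sm c a * b = sm c b * a"
    by (simp add: scale_eq_mult[of c a] scale_eq_mult[of c b] ac_simps)
  then have "beta_term (sm c a) b - beta_term (sm c b) a =
      kscale (1/2) (wg (sm c a) b - wg (sm c b) a)"
    by (simp add: beta_term_def kscale_def fun_eq_iff algebra_simps)
  also have "\<dots> \<approx> kscale (1/2) (kscale c (wg a b) - kscale c (wg b a))"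
    by (intro Wedge.cong_mod_scale Wedge.cong_mod_diff wg_scale_left)
  also have "\<dots> = kscale (1/2) (kscale c (wg a b) + kscale c (wg a b) - kscale c (wg a b + wg b a))"
    by (simp add: Wedge.scale_right_distrib)
  also have "\<dots> \<approx> kscale (1/2) (kscale c (wg a b) + kscale c (wg a b) - kscale c 0)"
    by (intro Wedge.cong_mod_scale Wedge.cong_mod_diff Wedge.cong_mod_refl wg_swap)
  also have "\<dots> = kscale c (wg a b)"
    using two by (simp add: kscale_def fun_eq_iff field_simps)
  finally show ?thesis .
qed

lemma beta_superset:
  assumes "finite S" "{x. f x \<noteq> 0} \<subseteq> S"
  shows "beta f \<approx> (\<Sum>x\<in>S. beta_term (f x) x)"
proof -
  have "beta f = (\<Sum>x\<in>S - {x. f x \<noteq> 0}. 0) + beta f"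
    by simp
  also have "\<dots> \<approx> (\<Sum>x\<in>S - {x. f x \<noteq> 0}. beta_term (f x) x) + beta f"
    by (intro Wedge.cong_mod_add Wedge.cong_mod_sum Wedge.cong_mod_refl)
       (simp add: Wedge.cong_mod_sym beta_term_zero)
  also have "\<dots> = (\<Sum>x\<in>S. beta_term (f x) x)"
    unfolding beta_def by (rule sum.subset_diff[OF assms(2,1), symmetric])
  finally show ?thesis .
qed

lemma beta_add:
  assumes "fsupp f" "fsupp g"
  shows "beta (f + g) \<approx> beta f + beta g"
proof -
  let ?S = "{x. f x \<noteq> 0} \<union> {x. g x \<noteq> 0}"
  have S: "finite ?S"
    using assms unfolding fsupp_def by auto
  have "beta (f + g) \<approx> (\<Sum>x\<in>?S. beta_term ((f + g) x) x)"
    by (rule beta_superset[OF S]) auto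
  also have "\<dots> \<approx> (\<Sum>x\<in>?S. beta_term (f x) x) + (\<Sum>x\<in>?S. beta_term (g x) x)"
    unfolding sum.distrib[symmetric] by (intro Wedge.cong_mod_sum) (simp add: beta_term_add_left)
  also have "\<dots> \<approx> beta f + beta g"
    by (intro Wedge.cong_mod_add; rule Wedge.cong_mod_sym, rule beta_superset[OF S]) auto
  finally show ?thesis .
qed

lemma beta_zero [simp]: "beta 0 = 0"
  by (simp add: beta_def)

lemma beta_diff:
  assumes "fsupp f" "fsupp g"
  shows "beta (f - g) \<approx> beta f - beta g"
proof -
  have "beta (f - g) + beta g \<approx> beta f"
    using beta_add[of "f - g" g] assms by (simp add: Wedge.cong_mod_sym)
  from Wedge.cong_mod_diff[OF this Wedge.cong_mod_refl, of "beta g"] show ?thesis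
    by simp
qed

lemma beta_sum:
  "(\<And>i. i \<in> I \<Longrightarrow> fsupp (f i)) \<Longrightarrow> beta (sum f I) \<approx> (\<Sum>i\<in>I. beta (f i))"
proof (induction I rule: infinite_finite_induct)
  case (insert i I)
  have "beta (sum f (insert i I)) = beta (f i + sum f I)"
    using insert.hyps by simp
  also have "\<dots> \<approx> beta (f i) + beta (sum f I)"
    using insert.prems by (intro beta_add) (auto intro: fsupp_sum)
  also have "\<dots> \<approx> beta (f i) + (\<Sum>i\<in>I. beta (f i))"
    using insert by (intro Wedge.cong_mod_add Wedge.cong_mod_refl) auto
  also have "\<dots> = (\<Sum>i\<in>insert i I. beta (f i))"
    using insert.hyps by simp
  finally show ?case .
qed simp_all

lemma beta_fdiff: "beta (fdiff a x) \<approx> beta_term a x"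
proof -
  have "beta (fdiff a x) \<approx> (\<Sum>y\<in>{x}. beta_term (fdiff a x y) y)"
    by (rule beta_superset) (auto simp: fdiff_def)
  then show ?thesis
    by (simp add: fdiff_def)
qed

lemma beta_fdiff_diff: "beta (fdiff a x - fdiff b y) \<approx> beta_term a x - beta_term b y"
proof -
  have "beta (fdiff a x - fdiff b y) \<approx> beta (fdiff a x) - beta (fdiff b y)"
    by (simp add: beta_diff)
  also have "\<dots> \<approx> beta_term a x - beta_term b y"
    by (intro Wedge.cong_mod_diff beta_fdiff)
  finally show ?thesis .
qed

lemma beta_fdiff_diff_diff:
  "beta (fdiff a x - fdiff b y - fdiff c z) \<approx> beta_term a x - beta_term b y - beta_term c z"
proof -
  have "beta (fdiff a x - fdiff b y - fdiff c z) \<approx> beta (fdiff a x - fdiff b y) - beta (fdiff c z)"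
    by (simp add: beta_diff)
  also have "\<dots> \<approx> beta_term a x - beta_term b y - beta_term c z"
    by (intro Wedge.cong_mod_diff beta_fdiff beta_fdiff_diff)
  finally show ?thesis .
qed

lemma beta_additive_rel: "beta (ascale c (fdiff 1 (x + y) - fdiff 1 x - fdiff 1 y)) \<approx> 0"
proof -
  have "beta (ascale c (fdiff 1 (x + y) - fdiff 1 x - fdiff 1 y)) \<approx>
      beta_term c (x + y) - beta_term c x - beta_term c y"
    by (simp add: Omega.scale_right_diff_distrib beta_fdiff_diff_diff)
  also have "\<dots> \<approx> 0"
    using beta_term_add_right[of c x y] by (simp add: Wedge.cong_mod_def diff_diff_eq)
  finally show ?thesis .
qed

lemma beta_homogeneous_rel: "beta (ascale c (fdiff 1 (sm s x) - fdiff (sm s 1) x)) \<approx> 0"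
proof -
  have "beta (ascale c (fdiff 1 (sm s x) - fdiff (sm s 1) x)) \<approx>
      beta_term c (sm s x) - beta_term (sm s c) x"
    by (simp add: Omega.scale_right_diff_distrib beta_fdiff_diff scale_eq_mult[of s c] mult.commute)
  also have "\<dots> \<approx> 0"
    using beta_term_homogeneous[of c s x] by (simp add: Wedge.cong_mod_def)
  finally show ?thesis .
qed

lemma beta_leibniz_rel: "beta (ascale c (fdiff 1 (x * y) - fdiff x y - fdiff y x)) \<approx> 0"
proof -
  have "beta (ascale c (fdiff 1 (x * y) - fdiff x y - fdiff y x)) \<approx>
      beta_term c (x * y) - beta_term (c * x) y - beta_term (c * y) x"
    by (simp add: Omega.scale_right_diff_distrib beta_fdiff_diff_diff)
  also have "\<dots> \<approx> 0"
    using beta_term_leibniz[of c x y] by (simp add: Wedge.cong_mod_def diff_diff_eq)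
  finally show ?thesis .
qed

lemma beta_omega_rel:
  assumes "f \<in> omega_rel sm"
  shows "beta f \<approx> 0"
proof -
  have "fsupp f \<and> beta f \<approx> 0"
    using assms unfolding omega_rel_def
  proof (induction rule: Omega.span_induct_alt)
    case (step c r f)
    from step.hyps have "beta (ascale c r) \<approx> 0"
      by (auto simp only: beta_additive_rel beta_homogeneous_rel beta_leibniz_rel)
    moreover have "fsupp (ascale c r)"
      using step.hyps by auto
    ultimately have "beta (ascale c r + f) \<approx> 0 + 0"
      using step.IH by (blast intro: Wedge.cong_mod_trans[OF beta_add] Wedge.cong_mod_add)
    with step.IH \<open>fsupp (ascale c r)\<close> show ?case
      unfolding add_0 by (blast intro: fsupp_add)
  qed (simp only: fsupp_zero beta_zero Wedge.cong_mod_refl simp_thms)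
  then show ?thesis ..
qed

lemma gamma_free_beta_term:
  assumes two: "(2::'k) \<noteq> 0"
  shows "gamma_free sm (beta_term a x) - fdiff a x \<in> omega_rel sm"
proof -
  define h where "h = sm (1/2) 1"
  have "h + h = 1"
    using two unfolding h_def K.scale_left_distrib[symmetric] by simp
  moreover have "ascale h (fdiff a x + fdiff a x) = fdiff ((h + h) * a) x"
    by (simp only: Omega.scale_right_distrib ascale_fdiff fdiff_add distrib_right)
  ultimately have halves: "ascale h (fdiff a x + fdiff a x) = fdiff a x"
    by simp
  have "gamma_free sm (beta_term a x) =
      ascale h (fdiff a x - fdiff x a + fdiff 1 (a * x) - fdiff (a * x) 1)"
    unfolding beta_term_def h_def
    by (simp add: gamma_free_kscale gamma_free_add gamma_free_wg add_diff_eq)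
  then have "gamma_free sm (beta_term a x) - fdiff a x =
      ascale h ((fdiff a x - fdiff x a + fdiff 1 (a * x) - fdiff (a * x) 1)
        - (fdiff a x + fdiff a x))"
    by (simp only: Omega.scale_right_diff_distrib halves)
  also have "\<dots> = ascale h (fdiff 1 (a * x) - fdiff a x - fdiff x a - fdiff (a * x) 1)"
    by (simp add: algebra_simps)
  also have "\<dots> \<in> omega_rel sm"
    by (intro omega_rel_scale omega_rel_diff omega_rel_leibniz omega_rel_fdiff_one)
  finally show ?thesis .
qed

lemma gamma_free_beta:
  assumes "(2::'k) \<noteq> 0" "fsupp f"
  shows "gamma_free sm (beta f) - f \<in> omega_rel sm"
proof -
  have "gamma_free sm (beta f) - f =
      (\<Sum>x | f x \<noteq> 0. gamma_free sm (beta_term (f x) x) - fdiff (f x) x)"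
    by (subst (2) fsupp_eq_sum_fdiff[OF assms(2)])
       (simp add: beta_def gamma_free_sum sum_subtractf)
  also have "\<dots> \<in> omega_rel sm"
    by (intro omega_rel_sum gamma_free_beta_term[OF assms(1)])
  finally show ?thesis .
qed

lemma beta_gamma_free:
  assumes two: "(2::'k) \<noteq> 0" and "fsupp w"
  shows "beta (gamma_free sm w) \<approx> w"
proof -
  let ?S = "{p. w p \<noteq> 0}"
  have "gamma_free sm w =
      (\<Sum>p\<in>?S. fdiff (sm (w p) (fst p)) (snd p) - fdiff (sm (w p) (snd p)) (fst p))"
    unfolding gamma_free_eq_sum
    by (intro sum.cong refl) (simp add: Omega.scale_right_diff_distrib scale_eq_mult[of _ "fst _"]
        scale_eq_mult[of _ "snd _"])
  then have "beta (gamma_free sm w) \<approx>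
      (\<Sum>p\<in>?S. beta (fdiff (sm (w p) (fst p)) (snd p) - fdiff (sm (w p) (snd p)) (fst p)))"
    by (simp only: beta_sum fsupp_diff fsupp_fdiff)
  also have "\<dots> \<approx>
      (\<Sum>p\<in>?S. beta_term (sm (w p) (fst p)) (snd p) - beta_term (sm (w p) (snd p)) (fst p))"
    by (intro Wedge.cong_mod_sum beta_fdiff_diff)
  also have "\<dots> \<approx> (\<Sum>p\<in>?S. kscale (w p) (wg (fst p) (snd p)))"
    by (intro Wedge.cong_mod_sum beta_term_antisym[OF two])
  also have "\<dots> = w"
    by (rule fsupp_eq_sum_wg[OF assms(2), symmetric])
  finally show ?thesis .
qed

end

theorem lemma1p1:
  fixes sm :: "'k::field \<Rightarrow> 'a::comm_ring_1 \<Rightarrow> 'a"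
  assumes "kalg sm"
    and "(2::'k) \<noteq> 0"
  shows "(\<forall>\<omega>\<in>omega_free. \<exists>w\<in>lambda_free. gamma_free sm w - \<omega> \<in> omega_rel sm)
       \<and> (\<forall>w\<in>lambda_free.
            gamma_free sm w \<in> omega_rel sm
              \<longleftrightarrow> w \<in> module.span kscale (lambda_rel_gens sm \<union> T0_gens))"
proof -
  interpret kalgebra sm
    by (rule kalgebra.intro) (rule assms(1))
  have "\<exists>w\<in>lambda_free. gamma_free sm w - \<omega> \<in> omega_rel sm" if "\<omega> \<in> omega_free" for \<omega>
  proof
    show "beta \<omega> \<in> lambda_free"
      by (simp add: lambda_free_def)
    show "gamma_free sm (beta \<omega>) - \<omega> \<in> omega_rel sm"
      using that unfolding omega_free_def by (simp add: gamma_free_beta assms(2))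
  qed
  moreover have "gamma_free sm w \<in> omega_rel sm \<longleftrightarrow> w \<in> Wedge.span (lambda_rel_gens sm \<union> T0_gens)"
    if "w \<in> lambda_free" for w
  proof
    assume "gamma_free sm w \<in> omega_rel sm"
    have "w \<approx> beta (gamma_free sm w)"
      using that unfolding lambda_free_def by (simp add: Wedge.cong_mod_sym beta_gamma_free assms(2))
    also have "\<dots> \<approx> 0"
      using \<open>gamma_free sm w \<in> omega_rel sm\<close> by (rule beta_omega_rel)
    finally show "w \<in> Wedge.span (lambda_rel_gens sm \<union> T0_gens)"
      by (simp add: Wedge.cong_mod_zero_iff)
  qed (rule gamma_free_wedge_rel_span)
  ultimately show ?thesis
    by blast
qed

end
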